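(* Assume (AC1) holds and $(\xi_i)_{i=1}^k$ is a family of vector fields as in (AC3). Then for every $u\in\mathcal A$ and every $d\in\mathcal H$ with $d\perp C_u$, $$\sum_{i=1}^k\langle u,\xi_i(u)\rangle\,\xi_i'(u)[d]=d-\sum_{i=1}^k\langle u,\xi_i'(u)[d]\rangle\,\xi_i(u).$$
   Context: $\mathcal H$ is a real Hilbert space with inner product $\langle\cdot,\cdot\rangle$; $\mathcal A\subset\mathcal H$ open; for each $u\in\mathcal A$, $C_u$ is a closed cone; $\operatorname{span}C$ is the smallest closed subspace containing $C$, $\operatorname{int}C$ the interior of $C$ relative to $\operatorname{span}C$; $d\perp C$ means $d\perp\operatorname{span}C$; $\phi:\mathcal A\to\mathcal A$ is a given map. (AC1): for all $u\in\mathcal A$, $u\in C_u$. (AC3): there exist a closed subspace $E\subset\mathcal H$ and $C^1$ maps $\xi_i:\mathcal A\to E^\perp$, $i=1,\dots,k$, such that for all $u\in\mathcal A$ and all $i$: (i) $(\xi_i(u))_{i=1}^k$ is orthonormal; (ii) for all $v\in V_u:=\operatorname{span}\{\xi_1(u),\dots,\xi_k(u)\}$, $\xi_i'(u)[v]\in V_u$; (iii) $\xi_i(v)=\xi_i(u)$ for all $v\in\operatorname{int}C_u\cap\mathcal A$; (iv) $\langle u,\xi_i(u)\rangle\ne0$; (v) there is $r>0$ such that $\xi_i'$ is bounded on $\{u\in\mathcal A:\operatorname{dist}(u,\operatorname{Ran}\phi)<r\}$; and $C_u:=E\oplus\{\sum_i t_i\xi_i(u): t_i\ge0\}$. *)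

theory Defs
  imports "HOL-Analysis.Analysis"
begin

definition cspan :: "'a::real_normed_vector set \<Rightarrow> 'a set" where
  "cspan C = closure (span C)"

definition cint :: "'a::real_normed_vector set \<Rightarrow> 'a set" where
  "cint C = {x \<in> C. \<exists>e>0. ball x e \<inter> cspan C \<subseteq> C}"

definition perp_cone :: "'a::real_inner \<Rightarrow> 'a set \<Rightarrow> bool" where
  "perp_cone d C \<longleftrightarrow> (\<forall>c\<in>cspan C. d \<bullet> c = 0)"

definition ACcone :: "'a::real_vector set \<Rightarrow> (nat \<Rightarrow> 'a \<Rightarrow> 'a) \<Rightarrow> nat \<Rightarrow> 'a \<Rightarrow> 'a set" where
  "ACcone E \<xi> k u = {e + (\<Sum>i=1..k. t i *\<^sub>R \<xi> i u) | e t. e \<in> E \<and> (\<forall>i. 0 \<le> t i)}"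

end

theory Submission
  imports Defs
begin

text \<open>
  On \<open>A\<close> the map \<open>P v = v - (\<Sum>i. (v \<bullet> \<xi>\<^sub>i v) \<xi>\<^sub>i v)\<close> removes the \<open>\<xi>\<close>-components of
  \<open>v \<in> C\<^sub>v\<close>, so by (AC1) it takes values in \<open>E\<close>; hence \<open>P'(u)[d]\<close> is orthogonal to every
  vector orthogonal to \<open>E\<close>. Since \<open>d \<perp> \<xi>\<^sub>i u\<close>, the vector \<open>w = P'(u)[d]\<close> is exactly the
  difference of the two sides of the identity, and \<open>w \<perp> E\<close> because \<open>d \<perp> E\<close> and \<open>\<xi>\<^sub>i\<close>
  (hence also \<open>\<xi>\<^sub>i'\<close>) takes values orthogonal to \<open>E\<close>. Thus \<open>w \<bullet> w = 0\<close>.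
  Only (AC1) and (AC3)(i) are needed.
\<close>

lemma has_derivative_orthogonal_if_orthogonal_on_open:
  fixes f :: "'a::real_normed_vector \<Rightarrow> 'b::real_inner"
  assumes "(f has_derivative f') (at u)" "open A" "u \<in> A" "\<And>v. v \<in> A \<Longrightarrow> f v \<bullet> w = 0"
  shows "f' h \<bullet> w = 0"
proof -
  have "((\<lambda>v. f v \<bullet> w) has_derivative (\<lambda>h. f' h \<bullet> w)) (at u)"
    using assms(1) by (auto intro!: derivative_eq_intros)
  moreover have "((\<lambda>v. f v \<bullet> w) has_derivative (\<lambda>_. 0)) (at u)"
    by (rule has_derivative_transform_within_open[OF has_derivative_const assms(2,3)])
       (simp add: assms(4))
  ultimately have "(\<lambda>h. f' h \<bullet> w) = (\<lambda>_. 0)"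
    using has_derivative_unique by blast
  then show ?thesis by meson
qed

lemma inner_orthonormal_sum:
  fixes x :: "nat \<Rightarrow> 'a::real_inner"
  assumes "finite I" "j \<in> I"
    and "\<And>i. i \<in> I \<Longrightarrow> x i \<bullet> x j = (if i = j then 1 else 0)"
    and "e \<bullet> x j = 0"
  shows "(e + (\<Sum>i\<in>I. t i *\<^sub>R x i)) \<bullet> x j = t j"
proof -
  have "(\<Sum>i\<in>I. t i * (x i \<bullet> x j)) = (\<Sum>i\<in>I. if i = j then t j else 0)"
    by (rule sum.cong) (simp_all add: assms(3))
  then show ?thesis
    using assms by (simp add: inner_add_left inner_sum_left)
qed

lemma orthonormal_remainder_eq:
  fixes x :: "nat \<Rightarrow> 'a::real_inner"
  assumes "finite I"
    and "\<And>i j. i \<in> I \<Longrightarrow> j \<in> I \<Longrightarrow> x i \<bullet> x j = (if i = j then 1 else 0)"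
    and "\<And>j. j \<in> I \<Longrightarrow> e \<bullet> x j = 0"
    and v: "v = e + (\<Sum>i\<in>I. t i *\<^sub>R x i)"
  shows "v - (\<Sum>i\<in>I. (v \<bullet> x i) *\<^sub>R x i) = e"
proof -
  have "(\<Sum>i\<in>I. (v \<bullet> x i) *\<^sub>R x i) = (\<Sum>i\<in>I. t i *\<^sub>R x i)"
    by (rule sum.cong) (simp_all add: v inner_orthonormal_sum assms(1-3))
  then show ?thesis by (simp add: v)
qed

lemma ACcone_remainder_in_subspace:
  assumes "v \<in> ACcone E \<xi> k v"
    and "\<And>i j. i \<in> {1..k} \<Longrightarrow> j \<in> {1..k} \<Longrightarrow> \<xi> i v \<bullet> \<xi> j v = (if i = j then 1 else 0)"
    and "\<And>i e. i \<in> {1..k} \<Longrightarrow> e \<in> E \<Longrightarrow> \<xi> i v \<bullet> e = 0"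
  shows "v - (\<Sum>i=1..k. (v \<bullet> \<xi> i v) *\<^sub>R \<xi> i v) \<in> E"
proof -
  obtain e t where e: "e \<in> E" and v: "v = e + (\<Sum>i=1..k. t i *\<^sub>R \<xi> i v)"
    using assms(1) unfolding ACcone_def by blast
  have "v - (\<Sum>i=1..k. (v \<bullet> \<xi> i v) *\<^sub>R \<xi> i v) = e"
    by (rule orthonormal_remainder_eq[OF _ assms(2) _ v])
       (use e assms(3) in \<open>simp_all add: inner_commute\<close>)
  then show ?thesis using e by simp
qed

lemma perp_cone_imp_orthogonal:
  assumes "perp_cone d C" "x \<in> C"
  shows "d \<bullet> x = 0"
  using assms unfolding perp_cone_def cspan_def
  by (meson closure_subset span_superset subsetD)

lemma subspace_subset_ACcone:
  assumes "e \<in> E"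
  shows "e \<in> ACcone E \<xi> k u"
  unfolding ACcone_def using assms
  by (intro CollectI exI[of _ e] exI[of _ "\<lambda>_. 0"]) simp

lemma generator_in_ACcone:
  assumes "subspace E" "j \<in> {1..k}"
  shows "\<xi> j u \<in> ACcone E \<xi> k u"
proof -
  have "(\<Sum>i=1..k. (if i = j then 1 else 0) *\<^sub>R \<xi> i u) = (\<Sum>i=1..k. if i = j then \<xi> i u else 0)"
    by (rule sum.cong) auto
  also have "\<dots> = \<xi> j u" using assms(2) by simp
  finally show ?thesis unfolding ACcone_def
    using subspace_0[OF assms(1)]
    by (intro CollectI exI[of _ 0] exI[of _ "\<lambda>i. if i = j then 1 else 0"]) simp
qed

theorem mainTheorem3:
  fixes A :: "'a::{real_inner, complete_space} set"
    and \<phi> :: "'a \<Rightarrow> 'a"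
    and E :: "'a set"
    and k :: nat
    and \<xi> :: "nat \<Rightarrow> 'a \<Rightarrow> 'a"
    and \<xi>' :: "nat \<Rightarrow> 'a \<Rightarrow> 'a \<Rightarrow>\<^sub>L 'a"
  assumes A_open: "open A"
    and \<phi>_maps: "\<forall>u\<in>A. \<phi> u \<in> A"
    and k_pos: "1 \<le> k"
    and E_sub: "subspace E" and E_closed: "closed E"
    and \<xi>_perp: "\<forall>i\<in>{1..k}. \<forall>u\<in>A. \<forall>e\<in>E. \<xi> i u \<bullet> e = 0"
    and \<xi>_deriv: "\<forall>i\<in>{1..k}. \<forall>u\<in>A. (\<xi> i has_derivative blinfun_apply (\<xi>' i u)) (at u)"
    and \<xi>_C1: "\<forall>i\<in>{1..k}. continuous_on A (\<xi>' i)"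
    and AC3_i: "\<forall>u\<in>A. \<forall>i\<in>{1..k}. \<forall>j\<in>{1..k}. \<xi> i u \<bullet> \<xi> j u = (if i = j then 1 else 0)"
    and AC3_ii: "\<forall>u\<in>A. \<forall>i\<in>{1..k}. \<forall>v\<in>span ((\<lambda>j. \<xi> j u) ` {1..k}).
                   blinfun_apply (\<xi>' i u) v \<in> span ((\<lambda>j. \<xi> j u) ` {1..k})"
    and AC3_iii: "\<forall>u\<in>A. \<forall>i\<in>{1..k}. \<forall>v\<in>cint (ACcone E \<xi> k u) \<inter> A. \<xi> i v = \<xi> i u"
    and AC3_iv: "\<forall>u\<in>A. \<forall>i\<in>{1..k}. u \<bullet> \<xi> i u \<noteq> 0"
    and AC3_v: "\<exists>r>0. \<forall>i\<in>{1..k}. \<exists>B. \<forall>u\<in>A. infdist u (\<phi> ` A) < r \<longrightarrow> norm (\<xi>' i u) \<le> B"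
    and AC1: "\<forall>u\<in>A. u \<in> ACcone E \<xi> k u"
    and u_in: "u \<in> A"
    and d_perp: "perp_cone d (ACcone E \<xi> k u)"
  shows "(\<Sum>i=1..k. (u \<bullet> \<xi> i u) *\<^sub>R blinfun_apply (\<xi>' i u) d)
         = d - (\<Sum>i=1..k. (u \<bullet> blinfun_apply (\<xi>' i u) d) *\<^sub>R \<xi> i u)"
proof -
  define P where "P v = v - (\<Sum>i=1..k. (v \<bullet> \<xi> i v) *\<^sub>R \<xi> i v)" for v
  define w where "w = d - (\<Sum>i=1..k. (u \<bullet> \<xi>' i u d) *\<^sub>R \<xi> i u)
                        - (\<Sum>i=1..k. (u \<bullet> \<xi> i u) *\<^sub>R \<xi>' i u d)"
  have d_\<xi>: "d \<bullet> \<xi> j u = 0" if "j \<in> {1..k}" for j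
    using perp_cone_imp_orthogonal[OF d_perp generator_in_ACcone[OF E_sub that]] .
  have \<xi>'_E: "\<xi>' i u h \<bullet> e = 0" if "i \<in> {1..k}" "e \<in> E" for i h e
    using that \<xi>_deriv \<xi>_perp u_in
    by (intro has_derivative_orthogonal_if_orthogonal_on_open[OF _ A_open u_in]) auto
  have w_E: "w \<bullet> e = 0" if "e \<in> E" for e
    using that \<xi>'_E \<xi>_perp u_in perp_cone_imp_orthogonal[OF d_perp subspace_subset_ACcone]
    by (simp add: w_def inner_diff_left inner_sum_left)
  have P_E: "P v \<in> E" if "v \<in> A" for v
    unfolding P_def using that AC1 AC3_i \<xi>_perp by (intro ACcone_remainder_in_subspace) auto
  have "(P has_derivative (\<lambda>h. h - (\<Sum>i=1..k. (h \<bullet> \<xi> i u + u \<bullet> \<xi>' i u h) *\<^sub>R \<xi> i u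
                                         + (u \<bullet> \<xi> i u) *\<^sub>R \<xi>' i u h))) (at u)"
    unfolding P_def using \<xi>_deriv u_in
    by (auto intro!: derivative_eq_intros simp: algebra_simps)
  then have "(d - (\<Sum>i=1..k. (d \<bullet> \<xi> i u + u \<bullet> \<xi>' i u d) *\<^sub>R \<xi> i u
                              + (u \<bullet> \<xi> i u) *\<^sub>R \<xi>' i u d)) \<bullet> w = 0"
    by (rule has_derivative_orthogonal_if_orthogonal_on_open[OF _ A_open u_in])
       (simp add: P_E w_E inner_commute)
  moreover have "d - (\<Sum>i=1..k. (d \<bullet> \<xi> i u + u \<bullet> \<xi>' i u d) *\<^sub>R \<xi> i u
                              + (u \<bullet> \<xi> i u) *\<^sub>R \<xi>' i u d) = w"
    using d_\<xi> by (simp add: w_def sum.distrib algebra_simps)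
  ultimately have "w = 0" by simp
  then show ?thesis by (simp add: w_def algebra_simps)
qed

end
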